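(* Let $r\ge1$, $a,b,q$ be nonnegative integers and $p$ a real number with $0\le p\le b$, $0\le q\le a$, $a-q=r(b-p)$, and $a$ and $b$ not both zero. Let $P\subset\mathbb{R}^2$ be the closed (possibly degenerate) pentagon with vertices $(0,0),(0,a),(p,a),(b,q),(b,0)$. Call a sequence $(c_1,\dots,c_a)$ of nonnegative integers a parking function in $P$ if its nondecreasing rearrangement $s_1\le s_2\le\cdots\le s_a$ is the left-area sequence of some lattice path from $(0,a)$ to $(b,0)$ with unit steps $(0,-1)$ and $(1,0)$ contained in $P$, where the left-area sequence of such a path is $(s_1,\dots,s_a)$ with $s_i$ the $x$-coordinate of the down step going from height $a-i+1$ to height $a-i$. Define $G(a,b,p,r,q)$ recursively by $$G(a,b,p,r,q)=\begin{cases}(b+1)^a & \text{if } p=b \ (\text{equivalently } q=a,\ P\text{ a rectangle or segment}),\\[4pt] \displaystyle\sum_{w=0}^{q} b^{a-q+w}\binom{a}{q-w} & \text{else if } a-q\le r,\\[4pt] \displaystyle\sum_{w=0}^{q}(\lfloor p\rfloor+1)^{a-w}(b-\lfloor p\rfloor)^{w}\binom{a}{w}+\sum_{t=q+1}^{q+(b-\lfloor p\rfloor-1)r}(\lfloor p\rfloor+1)^{a-t}\binom{a}{t}\,G(\xi_t) & \text{otherwise,}\end{cases}$$ where $\xi_t=\big(t,\ b-\lfloor p\rfloor-1,\ b-\lfloor p\rfloor-\tfrac{t-q}{r}-1,\ r,\ q\big)$. Then the number of parking functions in $P$ equals $G(a,b,p,r,q)$.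
   Context: The pentagon $P$ has a slanted side from $(p,a)$ to $(b,q)$ along which the height drops by $r$ for each unit of horizontal displacement; $\lfloor p\rfloor$ denotes the integer part of $p$. *)

theory Defs
  imports "HOL-Analysis.Analysis"
begin

definition pentagon :: "nat \<Rightarrow> nat \<Rightarrow> real \<Rightarrow> nat \<Rightarrow> (real \<times> real) set" where
  "pentagon a b p q = convex hull {(0,0), (0, real a), (p, real a), (real b, real q), (real b, 0)}"

text \<open>A lattice path starting at (0,a) is encoded by its list of unit steps:
  True = down step (0,-1), False = right step (1,0).
  The k-th vertex of the path:\<close>
definition path_pt :: "nat \<Rightarrow> bool list \<Rightarrow> nat \<Rightarrow> real \<times> real" where
  "path_pt a st k = (real (length (filter Not (take k st))),
                     real a - real (length (filter id (take k st))))"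

definition lattice_path_in :: "nat \<Rightarrow> nat \<Rightarrow> (real \<times> real) set \<Rightarrow> bool list \<Rightarrow> bool" where
  "lattice_path_in a b S st \<longleftrightarrow>
     length (filter id st) = a \<and> length (filter Not st) = b \<and>
     (\<forall>k < length st. closed_segment (path_pt a st k) (path_pt a st (Suc k)) \<subseteq> S)"

fun left_area_aux :: "nat \<Rightarrow> bool list \<Rightarrow> nat list" where
  "left_area_aux x [] = []"
| "left_area_aux x (True # st) = x # left_area_aux x st"
| "left_area_aux x (False # st) = left_area_aux (Suc x) st"

definition left_area :: "bool list \<Rightarrow> nat list" where
  "left_area st = left_area_aux 0 st"

definition parking_fn :: "nat \<Rightarrow> nat \<Rightarrow> real \<Rightarrow> nat \<Rightarrow> nat list \<Rightarrow> bool" where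
  "parking_fn a b p q c \<longleftrightarrow> length c = a \<and>
     (\<exists>st. lattice_path_in a b (pentagon a b p q) st \<and> sort c = left_area st)"

text \<open>The guard "0 < b" in front of the
  recursive call is always true when the third case is reached under the hypotheses of the
  theorem (b = 0 forces p = b); it is only there to make the recursion total.\<close>
function G :: "nat \<Rightarrow> nat \<Rightarrow> real \<Rightarrow> nat \<Rightarrow> nat \<Rightarrow> nat" where
  "G a b p r q =
    (if p = real b then (b + 1) ^ a
     else if a - q \<le> r then (\<Sum>w = 0..q. b ^ (a - q + w) * (a choose (q - w)))
     else (\<Sum>w = 0..q. (nat \<lfloor>p\<rfloor> + 1) ^ (a - w) * (b - nat \<lfloor>p\<rfloor>) ^ w * (a choose w))
        + (\<Sum>t = q + 1..q + (b - nat \<lfloor>p\<rfloor> - 1) * r.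
             (nat \<lfloor>p\<rfloor> + 1) ^ (a - t) * (a choose t) *
             (if 0 < b then
                G t (b - nat \<lfloor>p\<rfloor> - 1)
                  (real (b - nat \<lfloor>p\<rfloor>) - (real t - real q) / real r - 1) r q
              else 0)))"
  by pat_completeness auto
termination
  by (relation "Wellfounded.measure (\<lambda>(a, b, p, r, q). b)") auto

end

theory Submission
  imports Defs
begin

text \<open>Inside the pentagon the slanted side is the line \<open>y = q + r (b - x)\<close>, and a
  monotone lattice path lies in the (convex) pentagon iff its vertices do.  Hence a sequence
  is a parking function iff its \<open>i\<close>-th smallest entry \<open>s\<^sub>i\<close> (counted from 0) satisfies
  \<open>s\<^sub>i \<le> b\<close> and \<open>r s\<^sub>i \<le> r p + i\<close>.  For \<open>f = \<lfloor>p\<rfloor>\<close> the entries \<open>\<le> f\<close> are unconstrained;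
  choosing the \<open>t\<close> positions of the larger entries and the values of the others gives
  \<open>(a choose t) (f + 1)\<^sup>a\<^sup>-\<^sup>t\<close>, while the larger entries, shifted down by \<open>f + 1\<close>, form a
  parking function of the same kind in the pentagon \<open>\<xi>\<^sub>t\<close> of width \<open>b - f - 1\<close>.  That
  pentagon is a rectangle for \<open>t \<le> q\<close> and empty for \<open>t > q + (b - f - 1) r\<close>, which gives
  the recursion for \<open>G\<close> by induction on \<open>b\<close>.\<close>

lemma convex_slanted_region:
  "convex {(x, y). 0 \<le> x \<and> x \<le> (b::real) \<and> 0 \<le> y \<and> y \<le> (a::real) \<and> y \<le> q + r * (b - x)}"
proof -
  have "{(x, y). 0 \<le> x \<and> x \<le> b \<and> 0 \<le> y \<and> y \<le> a \<and> y \<le> q + r * (b - x)} =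
      {z. inner (-1, 0) z \<le> 0} \<inter> {z. inner (1, 0) z \<le> b} \<inter> {z. inner (0, -1) z \<le> 0}
      \<inter> {z. inner (0, 1) z \<le> a} \<inter> {z. inner (r, 1) z \<le> q + r * b}"
    by (auto simp: inner_Pair algebra_simps)
  then show ?thesis by (simp add: convex_Int convex_halfspace_le)
qed

locale slanted_pentagon =
  fixes a b q r :: nat and p :: real
  assumes p_nonneg: "0 \<le> p" and p_le_b: "p \<le> real b" and q_le_a: "q \<le> a"
    and slope: "real a - real q = real r * (real b - p)"
begin

lemma pentagon_eq:
  "pentagon a b p q =
     {(x, y). 0 \<le> x \<and> x \<le> real b \<and> 0 \<le> y \<and> y \<le> real a \<and> y \<le> real q + real r * (real b - x)}"
    (is "?H = ?R")
proof
  have "real a \<le> real q + real r * real b"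
    using slope mult_nonneg_nonneg[OF of_nat_0_le_iff p_nonneg, of r] by argo
  then show "?H \<subseteq> ?R"
    unfolding pentagon_def using p_nonneg p_le_b q_le_a slope
    by (intro hull_minimal convex_slanted_region) (auto simp: algebra_simps)
next
  have cvx: "convex ?H"
    unfolding pentagon_def by (rule convex_convex_hull)
  have seg: "closed_segment A B \<subseteq> ?H"
    if "A \<in> {(0,0), (0, real a), (p, real a), (real b, real q), (real b, 0)}"
       "B \<in> {(0,0), (0, real a), (p, real a), (real b, real q), (real b, 0)}" for A B
    using that unfolding pentagon_def by (intro closed_segment_subset convex_convex_hull hull_inc)
  show "?R \<subseteq> ?H"
  proof (clarify)
    fix x y assume x: "0 \<le> x" "x \<le> real b" and y: "0 \<le> y" "y \<le> real a"
      and below: "y \<le> real q + real r * (real b - x)"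
    obtain t where top: "(x, t) \<in> ?H" and "y \<le> t"
    proof (cases "x \<le> p")
      case True
      have "(x, real a) \<in> closed_segment (0, real a) (p, real a)"
        using True x by (simp add: closed_segment_same_snd closed_segment_eq_real_ivl p_nonneg)
      then show ?thesis using seg y that by blast
    next
      case False
      define u where "u = (x - p) / (real b - p)"
      have u: "0 \<le> u" "u \<le> 1" using False x by (auto simp: u_def)
      have ux: "u * (real b - p) = x - p" using False x by (simp add: u_def)
      have "(1 - u) * real a + u * real q = real a - u * (real a - real q)"
        by (simp add: algebra_simps)
      also have "\<dots> = real a - real r * (x - p)"
        by (simp add: slope mult.left_commute flip: ux)
      also have "\<dots> = real q + real r * (real b - x)"
        using slope by (simp add: algebra_simps)
      finally have "(x, real q + real r * (real b - x)) = (1 - u) *\<^sub>R (p, real a) + u *\<^sub>R (real b, real q)"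
        using ux by (simp add: algebra_simps)
      then have "(x, real q + real r * (real b - x)) \<in> closed_segment (p, real a) (real b, real q)"
        using u by (auto simp: in_segment)
      then show ?thesis using seg below that by blast
    qed
    have "(x, 0) \<in> closed_segment (0, 0) (real b, 0)"
      using x by (simp add: closed_segment_same_snd closed_segment_eq_real_ivl)
    then have bottom: "(x, 0) \<in> ?H" using seg by blast
    have "(x, y) \<in> closed_segment (x, 0) (x, t)"
      using y \<open>y \<le> t\<close> by (simp add: closed_segment_same_fst closed_segment_eq_real_ivl)
    then show "(x, y) \<in> ?H"
      using closed_segment_subset[OF bottom top cvx] by blast
  qed
qed

end

lemma filter_eta_id [simp]: "filter (\<lambda>b. b) xs = filter id xs"
  by (simp add: id_def)

lemma length_left_area_aux: "length (left_area_aux x st) = length (filter id st)"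
  by (induction x st rule: left_area_aux.induct) auto

lemma left_area_aux_ge: "y \<in> set (left_area_aux x st) \<Longrightarrow> x \<le> y"
  by (induction x st rule: left_area_aux.induct) force+

lemma left_area_aux_nth_down_step:
  assumes "i < length (filter id st)"
  obtains k where "k < length st" "st ! k" "length (filter id (take k st)) = i"
    "left_area_aux x st ! i = x + length (filter Not (take k st))"
  using assms
proof (induction x st arbitrary: i thesis rule: left_area_aux.induct)
  case (2 x st)
  show ?case
  proof (cases i)
    case 0
    then show ?thesis using "2.prems"(1)[of 0] by simp
  next
    case (Suc j)
    with "2.prems"(2) have "j < length (filter id st)" by simp
    then obtain k where "k < length st" "st ! k" "length (filter id (take k st)) = j"
      "left_area_aux x st ! j = x + length (filter Not (take k st))"
      using "2.IH" by blast
    with Suc show ?thesis using "2.prems"(1)[of "Suc k"] by simp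
  qed
next
  case (3 x st)
  then have "i < length (filter id st)" by simp
  then obtain k where "k < length st" "st ! k" "length (filter id (take k st)) = i"
    "left_area_aux (Suc x) st ! i = Suc x + length (filter Not (take k st))"
    using "3.IH" by blast
  then show ?case using "3.prems"(1)[of "Suc k"] by simp
qed simp

lemma left_area_aux_nth_ge_vertex:
  assumes "k \<le> length st" "length (filter id (take k st)) < length (filter id st)"
  shows "x + length (filter Not (take k st)) \<le> left_area_aux x st ! length (filter id (take k st))"
  using assms
proof (induction x st arbitrary: k rule: left_area_aux.induct)
  case (2 x st)
  then show ?case by (cases k) auto
next
  case (3 x st)
  show ?case
  proof (cases k)
    case 0
    with "3.prems" have "left_area_aux (Suc x) st ! 0 \<in> set (left_area_aux (Suc x) st)"
      by (simp add: length_left_area_aux)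
    with 0 show ?thesis using left_area_aux_ge by fastforce
  next
    case (Suc j)
    with "3.IH"[of j] "3.prems" show ?thesis by simp
  qed
qed simp

fun area_steps :: "nat \<Rightarrow> nat list \<Rightarrow> nat \<Rightarrow> bool list" where
  "area_steps x [] b = replicate (b - x) False"
| "area_steps x (s # ss) b = replicate (s - x) False @ True # area_steps s ss b"

lemma left_area_aux_replicate_False:
  "left_area_aux x (replicate n False @ st) = left_area_aux (x + n) st"
  by (induction n arbitrary: x) auto

lemma left_area_aux_area_steps: "sorted (x # s) \<Longrightarrow> left_area_aux x (area_steps x s b) = s"
  by (induction x s b rule: area_steps.induct)
    (auto simp: left_area_aux_replicate_False
      left_area_aux_replicate_False[where st = "[]", simplified])

lemma down_steps_area_steps: "length (filter id (area_steps x s b)) = length s"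
  by (induction x s b rule: area_steps.induct) auto

lemma right_steps_area_steps:
  "sorted (x # s) \<Longrightarrow> \<forall>y\<in>set s. y \<le> b \<Longrightarrow> x \<le> b \<Longrightarrow>
    length (filter Not (area_steps x s b)) = b - x"
  by (induction x s b rule: area_steps.induct) auto

text \<open>The index \<open>i\<close> is 0-based: the \<open>i\<close>-th smallest entry is the \<open>x\<close>-coordinate of the
  down step leaving height \<open>a - i\<close>.\<close>
definition line_parking_fn :: "nat \<Rightarrow> nat \<Rightarrow> real \<Rightarrow> nat \<Rightarrow> nat list \<Rightarrow> bool" where
  "line_parking_fn a b p r c \<longleftrightarrow> length c = a \<and>
     (\<forall>i<a. sort c ! i \<le> b \<and> real r * real (sort c ! i) \<le> real r * p + real i)"

lemma length_filter_take_le: "length (filter P (take k xs)) \<le> length (filter P xs)"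
  by (metis append_take_drop_id filter_append length_append le_add1)

context slanted_pentagon
begin

lemma path_pt_in_pentagon:
  assumes down: "length (filter id st) = a" and right: "length (filter Not st) = b"
    and below: "\<forall>i<a. real r * real (left_area st ! i) \<le> real r * p + real i"
    and k: "k \<le> length st"
  shows "path_pt a st k \<in> pentagon a b p q"
proof -
  define x where "x = length (filter Not (take k st))"
  define i where "i = length (filter id (take k st))"
  have "x \<le> b" "i \<le> a"
    using length_filter_take_le down right by (auto simp: x_def i_def)
  moreover have "real a - real i \<le> real q + real r * (real b - real x)"
  proof (cases "i < a")
    case True
    then have "x \<le> left_area st ! i"
      using left_area_aux_nth_ge_vertex[OF k, of 0] down by (simp add: x_def i_def left_area_def)
    then have "real r * real x \<le> real r * p + real i"
      using below True by (meson mult_left_mono of_nat_0_le_iff of_nat_mono order_trans)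
    then show ?thesis using slope by (simp add: algebra_simps)
  next
    case False
    then show ?thesis using \<open>x \<le> b\<close> \<open>i \<le> a\<close> by simp
  qed
  ultimately show ?thesis
    by (simp add: pentagon_eq path_pt_def x_def i_def)
qed

lemma parking_fn_iff_line_parking_fn: "parking_fn a b p q c \<longleftrightarrow> line_parking_fn a b p r c"
proof
  assume "parking_fn a b p q c"
  then obtain st where path: "lattice_path_in a b (pentagon a b p q) st"
    and sort_c: "sort c = left_area st" and "length c = a"
    by (auto simp: parking_fn_def)
  have "sort c ! i \<le> b \<and> real r * real (sort c ! i) \<le> real r * p + real i" if "i < a" for i
  proof -
    have "i < length (filter id st)"
      using that path by (simp add: lattice_path_in_def)
    then obtain k where k: "k < length st" "length (filter id (take k st)) = i"
      "left_area st ! i = length (filter Not (take k st))"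
      using left_area_aux_nth_down_step[of i st 0] unfolding left_area_def by auto
    have "path_pt a st k \<in> pentagon a b p q"
      using path k(1) by (auto simp: lattice_path_in_def)
    moreover have "path_pt a st k = (real (sort c ! i), real a - real i)"
      using k sort_c by (simp add: path_pt_def)
    ultimately show ?thesis
      using slope by (auto simp: pentagon_eq algebra_simps)
  qed
  with \<open>length c = a\<close> show "line_parking_fn a b p r c"
    by (simp add: line_parking_fn_def)
next
  assume lpf: "line_parking_fn a b p r c"
  define st where "st = area_steps 0 (sort c) b"
  have sorted: "sorted (0 # sort c)" by simp
  have le_b: "\<forall>y\<in>set (sort c). y \<le> b"
    using lpf unfolding line_parking_fn_def by (metis in_set_conv_nth length_sort)
  have area: "left_area st = sort c"
    using left_area_aux_area_steps[OF sorted] by (simp add: st_def left_area_def)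
  have down: "length (filter id st) = a" and right: "length (filter Not st) = b"
    using lpf down_steps_area_steps right_steps_area_steps[OF sorted le_b]
    by (simp_all add: st_def line_parking_fn_def)
  have "closed_segment (path_pt a st k) (path_pt a st (Suc k)) \<subseteq> pentagon a b p q"
    if "k < length st" for k
    using that lpf area unfolding pentagon_def
    by (intro closed_segment_subset convex_convex_hull path_pt_in_pentagon[unfolded pentagon_def]
        down right) (auto simp: line_parking_fn_def)
  then have "lattice_path_in a b (pentagon a b p q) st"
    using down right by (simp add: lattice_path_in_def)
  with area lpf show "parking_fn a b p q c"
    by (auto simp: parking_fn_def line_parking_fn_def)
qed

end

lemma card_lists_Suc_length:
  assumes "finite A"
  shows "card {c. length c = Suc n \<and> set c \<subseteq> A \<and> P c} =
     (\<Sum>x\<in>A. card {c. length c = n \<and> set c \<subseteq> A \<and> P (x # c)})"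
proof -
  have fin: "finite {c. length c = n \<and> set c \<subseteq> A \<and> P (x # c)}" for x
    by (rule finite_subset[OF _ finite_lists_length_eq[OF assms, of n]]) auto
  have "{c. length c = Suc n \<and> set c \<subseteq> A \<and> P c} =
     (\<Union>x\<in>A. (#) x ` {c. length c = n \<and> set c \<subseteq> A \<and> P (x # c)})"
    by (auto simp: length_Suc_conv)
  also have "card \<dots> = (\<Sum>x\<in>A. card ((#) x ` {c. length c = n \<and> set c \<subseteq> A \<and> P (x # c)}))"
    using assms fin by (intro card_UN_disjoint) auto
  also have "\<dots> = (\<Sum>x\<in>A. card {c. length c = n \<and> set c \<subseteq> A \<and> P (x # c)})"
    by (intro sum.cong refl card_image) (simp add: inj_on_def)
  finally show ?thesis .
qed

lemma binomial_sum_Suc: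
  fixes y :: nat and g :: "nat \<Rightarrow> nat"
  shows "(\<Sum>t\<le>Suc n. (Suc n choose t) * y ^ (Suc n - t) * g t) =
    y * (\<Sum>t\<le>n. (n choose t) * y ^ (n - t) * g t) + (\<Sum>t\<le>n. (n choose t) * y ^ (n - t) * g (Suc t))"
proof -
  have pascal: "(\<Sum>t\<le>Suc n. (Suc n choose t) * y ^ (Suc n - t) * g t) =
      y ^ Suc n * g 0 + (\<Sum>t\<le>n. (n choose Suc t) * y ^ (n - t) * g (Suc t))
        + (\<Sum>t\<le>n. (n choose t) * y ^ (n - t) * g (Suc t))"
    by (subst sum.atMost_Suc_shift) (simp add: sum.distrib algebra_simps)
  have "y ^ Suc n * g 0 + (\<Sum>t\<le>n. (n choose Suc t) * y ^ (n - t) * g (Suc t)) =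
      (\<Sum>t\<le>Suc n. (n choose t) * y ^ (Suc n - t) * g t)"
    by (simp only: sum.atMost_Suc_shift) simp
  also have "\<dots> = (\<Sum>t\<le>n. (n choose t) * y ^ (Suc n - t) * g t)"
    by simp
  also have "\<dots> = y * (\<Sum>t\<le>n. (n choose t) * y ^ (n - t) * g t)"
    by (simp add: sum_distrib_left Suc_diff_le algebra_simps)
  finally show ?thesis using pascal by simp
qed

lemma card_lists_filter:
  assumes "finite S"
  shows "card {c. length c = n \<and> set c \<subseteq> S \<and> R (filter P c)} =
    (\<Sum>t\<le>n. (n choose t) * card {x\<in>S. \<not> P x} ^ (n - t) *
       card {e. length e = t \<and> set e \<subseteq> {x\<in>S. P x} \<and> R e})"
proof (induction n arbitrary: R)
  case 0
  have "{c. length c = 0 \<and> set c \<subseteq> S \<and> R (filter P c)} = {e. length e = 0 \<and> set e \<subseteq> {x\<in>S. P x} \<and> R e}"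
    by auto
  then show ?case by simp
next
  case (Suc n)
  define L where "L = {x\<in>S. \<not> P x}"
  define H where "H = {x\<in>S. P x}"
  define N where "N R t = card {e. length e = t \<and> set e \<subseteq> H \<and> R e}" for R t
  define F where "F R x = card {c. length c = n \<and> set c \<subseteq> S \<and> R (filter P (x # c))}" for R x
  have split: "S = L \<union> H" "L \<inter> H = {}" and fin: "finite L" "finite H"
    using assms by (auto simp: L_def H_def)
  have IH: "card {c. length c = n \<and> set c \<subseteq> S \<and> R' (filter P c)} =
      (\<Sum>t\<le>n. (n choose t) * card L ^ (n - t) * N R' t)" for R'
    unfolding L_def N_def H_def by (rule Suc.IH)
  have "card {c. length c = Suc n \<and> set c \<subseteq> S \<and> R (filter P c)} = (\<Sum>x\<in>S. F R x)"
    unfolding F_def by (rule card_lists_Suc_length[OF assms])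
  also have "\<dots> = (\<Sum>x\<in>L. F R x) + (\<Sum>x\<in>H. F R x)"
    unfolding split(1) using split(2) fin by (simp add: sum.union_disjoint)
  also have "(\<Sum>x\<in>L. F R x) = card L * (\<Sum>t\<le>n. (n choose t) * card L ^ (n - t) * N R t)"
    using IH[of R] by (simp add: F_def L_def)
  also have "(\<Sum>x\<in>H. F R x) = (\<Sum>x\<in>H. \<Sum>t\<le>n. (n choose t) * card L ^ (n - t) * N (\<lambda>e. R (x # e)) t)"
    using IH by (intro sum.cong refl) (simp add: F_def H_def)
  also have "\<dots> = (\<Sum>t\<le>n. (n choose t) * card L ^ (n - t) * (\<Sum>x\<in>H. N (\<lambda>e. R (x # e)) t))"
    by (subst sum.swap) (simp add: sum_distrib_left)
  also have "\<dots> = (\<Sum>t\<le>n. (n choose t) * card L ^ (n - t) * N R (Suc t))"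
    unfolding N_def using card_lists_Suc_length[OF fin(2)] by simp
  finally show ?case
    using binomial_sum_Suc[of n "card L" "N R"] by (simp add: L_def H_def N_def)
qed

lemma card_lists_shift:
  fixes k B :: nat
  assumes "k \<le> B"
  shows "card {e. length e = t \<and> set e \<subseteq> {k..B} \<and> Q (map (\<lambda>x. x - k) e)} =
         card {d. length d = t \<and> set d \<subseteq> {..B - k} \<and> Q d}"
proof -
  have "{e. length e = t \<and> set e \<subseteq> {k..B} \<and> Q (map (\<lambda>x. x - k) e)} =
      map (\<lambda>x. x + k) ` {d. length d = t \<and> set d \<subseteq> {..B - k} \<and> Q d}"
  proof (intro equalityI subsetI)
    fix e assume e: "e \<in> {e. length e = t \<and> set e \<subseteq> {k..B} \<and> Q (map (\<lambda>x. x - k) e)}"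
    then have "map (\<lambda>x. x - k) e \<in> {d. length d = t \<and> set d \<subseteq> {..B - k} \<and> Q d}"
      by (auto simp: subset_iff diff_le_mono)
    moreover have "e = map (\<lambda>x. x + k) (map (\<lambda>x. x - k) e)"
      using e by (auto simp: map_idI subset_iff)
    ultimately show "e \<in> map (\<lambda>x. x + k) ` {d. length d = t \<and> set d \<subseteq> {..B - k} \<and> Q d}"
      by (rule rev_image_eqI)
  qed (use assms in \<open>force simp: comp_def subset_iff\<close>)
  moreover have "inj_on (map (\<lambda>x. x + k)) A" for A
    by (simp add: inj_on_def)
  ultimately show ?thesis
    by (simp add: card_image)
qed

lemma line_parking_fn_lists:
  assumes "line_parking_fn a b p r c"
  shows "length c = a \<and> set c \<subseteq> {..b}"
proof (intro conjI subsetI)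
  fix x assume "x \<in> set c"
  then obtain i where "i < length (sort c)" "sort c ! i = x"
    by (metis in_set_conv_nth set_sort)
  with assms show "x \<in> {..b}"
    by (auto simp: line_parking_fn_def)
qed (use assms in \<open>simp add: line_parking_fn_def\<close>)

lemma card_line_parking_fn_ge:
  assumes "real b \<le> p"
  shows "card {c. line_parking_fn a b p r c} = (b + 1) ^ a"
proof -
  have below: "real r * real s \<le> real r * p + real i" if "s \<le> b" for s i
    using mult_left_mono[of "real s" p "real r"] that assms by simp
  have "line_parking_fn a b p r c" if "set c \<subseteq> {..b}" "length c = a" for c
  proof -
    have "sort c ! i \<le> b" if "i < a" for i
      using nth_mem[of i "sort c"] \<open>i < a\<close> \<open>set c \<subseteq> {..b}\<close> \<open>length c = a\<close> by auto
    with \<open>length c = a\<close> show ?thesis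
      by (simp add: line_parking_fn_def below)
  qed
  then have "{c. line_parking_fn a b p r c} = {c. set c \<subseteq> {..b} \<and> length c = a}"
    by (auto dest: line_parking_fn_lists)
  then show ?thesis
    using card_lists_length_eq[of "{..b}" a] by simp
qed

lemma not_line_parking_fn_neg:
  assumes "p < 0" "r \<ge> 1" "0 < a"
  shows "\<not> line_parking_fn a b p r c"
proof
  assume "line_parking_fn a b p r c"
  then have "real r * real (sort c ! 0) \<le> real r * p"
    using assms(3) by (auto simp: line_parking_fn_def)
  moreover have "real r * p < 0"
    using assms(1,2) by (simp add: mult_pos_neg)
  ultimately show False
    by (smt (verit) of_nat_0_le_iff mult_nonneg_nonneg)
qed

lemma line_parking_fn_split:
  assumes r: "r \<ge> 1" and f_le_p: "real f \<le> p" and f_less_b: "f < b" and len: "length c = a"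
  defines "e \<equiv> filter (\<lambda>x. f < x) c"
  shows "line_parking_fn a b p r c \<longleftrightarrow>
    line_parking_fn (length e) (b - Suc f) (p - real (Suc f) + (real a - real (length e)) / real r) r
      (map (\<lambda>x. x - Suc f) e)"
proof -
  define t where "t = length e"
  define d where "d = map (\<lambda>x. x - Suc f) e"
  define L where "L = sort (filter (\<lambda>x. \<not> f < x) c)"
  define C where "C i \<longleftrightarrow> sort c ! i \<le> b \<and> real r * real (sort c ! i) \<le> real r * p + real i" for i
  have len_L: "length L + t = a"
    using sum_length_filter_compl[of "\<lambda>x. f < x" c] len by (simp add: L_def t_def e_def)
  have sort_c: "sort c = L @ sort e"
    by (rule properties_for_sort) (auto simp: L_def e_def sorted_append)
  have sort_d: "sort d = map (\<lambda>x. x - Suc f) (sort e)"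
    by (rule properties_for_sort)
      (auto simp: d_def intro!: sorted_map_mono mono_onI diff_le_mono)
  have low: "C i" if "i < length L" for i
  proof -
    have "sort c ! i \<le> f"
      using nth_mem[OF that] sort_c that by (simp add: L_def nth_append)
    moreover from this have "real r * real (sort c ! i) \<le> real r * p"
      using f_le_p by (meson mult_left_mono of_nat_0_le_iff of_nat_mono order_trans)
    ultimately show ?thesis
      using f_less_b by (simp add: C_def)
  qed
  have high: "C (length L + j) \<longleftrightarrow> sort d ! j \<le> b - Suc f \<and>
      real r * real (sort d ! j) \<le> real r * (p - real (Suc f) + (real a - real t) / real r) + real j"
    if "j < t" for j
  proof -
    have "f < sort e ! j"
      using nth_mem[of j "sort e"] that by (simp add: t_def e_def)
    then have "sort c ! (length L + j) = sort d ! j + Suc f"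
      using sort_c sort_d that by (simp add: nth_append t_def)
    moreover have "real r * ((real a - real t) / real r) = real a - real t"
      using r by simp
    ultimately show ?thesis
      using f_less_b len_L by (auto simp: C_def algebra_simps)
  qed
  have "line_parking_fn a b p r c \<longleftrightarrow> (\<forall>i<length L + t. C i)"
    using len len_L by (simp add: line_parking_fn_def C_def)
  also have "\<dots> \<longleftrightarrow> (\<forall>j<t. C (length L + j))"
  proof (intro iffI allI impI)
    fix i assume "\<forall>j<t. C (length L + j)" "i < length L + t"
    then show "C i"
      using low[of i] by (cases "i < length L") (auto dest: spec[of _ "i - length L"])
  qed simp
  also have "\<dots> \<longleftrightarrow> line_parking_fn t (b - Suc f) (p - real (Suc f) + (real a - real t) / real r) r d"
    using high by (simp add: line_parking_fn_def d_def t_def)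
  finally show ?thesis
    by (simp add: t_def d_def)
qed

lemma card_line_parking_fn_split:
  assumes r: "r \<ge> 1" and "real f \<le> p" and "f < b"
  shows "card {c. line_parking_fn a b p r c} =
    (\<Sum>t\<le>a. (a choose t) * (f + 1) ^ (a - t) *
       card {d. line_parking_fn t (b - Suc f) (p - real (Suc f) + (real a - real t) / real r) r d})"
proof -
  define P where "P t d \<longleftrightarrow> line_parking_fn t (b - Suc f) (p - real (Suc f) + (real a - real t) / real r) r d"
    for t d
  have "line_parking_fn a b p r c \<longleftrightarrow>
      length c = a \<and> set c \<subseteq> {..b} \<and> P (length (filter ((<) f) c)) (map (\<lambda>x. x - Suc f) (filter ((<) f) c))"
    for c
  proof (cases "length c = a")
    case True
    then show ?thesis
      using line_parking_fn_split[OF assms True] line_parking_fn_lists[of a b p r c]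
      by (auto simp: P_def)
  qed (simp add: line_parking_fn_def)
  then have "{c. line_parking_fn a b p r c} =
      {c. length c = a \<and> set c \<subseteq> {..b} \<and> P (length (filter ((<) f) c)) (map (\<lambda>x. x - Suc f) (filter ((<) f) c))}"
    by blast
  then have "card {c. line_parking_fn a b p r c} =
      (\<Sum>t\<le>a. (a choose t) * card {x \<in> {..b}. \<not> f < x} ^ (a - t) *
         card {e. length e = t \<and> set e \<subseteq> {x \<in> {..b}. f < x} \<and> P (length e) (map (\<lambda>x. x - Suc f) e)})"
    using card_lists_filter[of "{..b}" a "\<lambda>e. P (length e) (map (\<lambda>x. x - Suc f) e)" "(<) f"] by simp
  also have "\<dots> = (\<Sum>t\<le>a. (a choose t) * (f + 1) ^ (a - t) * card {d. P t d})"
  proof (intro sum.cong refl arg_cong2[where f = "(*)"])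
    have "{x \<in> {..b}. \<not> f < x} = {..f}"
      using \<open>f < b\<close> by auto
    then show "card {x \<in> {..b}. \<not> f < x} ^ (a - t) = (f + 1) ^ (a - t)" for t
      by simp
    fix t
    have "{x \<in> {..b}. f < x} = {Suc f..b}" by auto
    then have "card {e. length e = t \<and> set e \<subseteq> {x \<in> {..b}. f < x} \<and> P (length e) (map (\<lambda>x. x - Suc f) e)} =
        card {d. length d = t \<and> set d \<subseteq> {..b - Suc f} \<and> P t d}"
      using card_lists_shift[of "Suc f" b t "P t"] \<open>f < b\<close>
      by (simp cong: conj_cong)
    also have "{d. length d = t \<and> set d \<subseteq> {..b - Suc f} \<and> P t d} = {d. P t d}"
      by (auto simp: P_def dest: line_parking_fn_lists)
    finally show "card {e. length e = t \<and> set e \<subseteq> {x \<in> {..b}. f < x} \<and> P (length e) (map (\<lambda>x. x - Suc f) e)} =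
        card {d. P t d}" .
  qed
  finally show ?thesis
    by (simp add: P_def)
qed

lemma card_line_parking_fn_step:
  assumes r: "r \<ge> 1" and "0 \<le> p" and p_less_b: "p < real b" and "q \<le> a"
    and slope: "real a - real q = real r * (real b - p)"
  defines "f \<equiv> nat \<lfloor>p\<rfloor>"
  defines "b' \<equiv> b - f - 1"
  defines "K \<equiv> \<lambda>t. card {d. line_parking_fn t b' (real (b - f) - (real t - real q) / real r - 1) r d}"
  shows "card {c. line_parking_fn a b p r c} =
      (\<Sum>w = 0..q. (f + 1) ^ (a - w) * (b - f) ^ w * (a choose w)) +
      (\<Sum>t = q + 1..q + b' * r. (f + 1) ^ (a - t) * (a choose t) * K t)"
proof -
  have r_pos: "real r > 0" using r by simp
  have f: "real f \<le> p" "p < real f + 1"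
    using \<open>0 \<le> p\<close> by (simp_all add: f_def)
  with p_less_b have "f < b" by linarith
  then have b': "real b' = real b - real f - 1" "b - f = Suc b'" "b - Suc f = b'"
    by (simp_all add: b'_def)
  have "real r * real b' < real r * (real b - p)"
    using f(2) r_pos by (simp add: b')
  then have "real (q + b' * r) < real a"
    using slope by (simp add: algebra_simps)
  then have top: "q + b' * r < a"
    by (simp only: of_nat_less_iff)
  have arg: "p - real (Suc f) + (real a - real t) / real r = real (b - f) - (real t - real q) / real r - 1" for t
  proof -
    have "real a / real r = real q / real r + (real b - p)"
      using slope r_pos by (simp add: field_simps)
    then show ?thesis
      using \<open>f < b\<close> by (simp add: diff_divide_distrib of_nat_diff)
  qed
  have low: "K t = (b - f) ^ t" if "t \<le> q" for t
    unfolding K_def b'(2) using that r_pos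
    by (subst card_line_parking_fn_ge) (simp_all add: b' divide_nonpos_pos)
  have high: "K t = 0" if "q + b' * r < t" for t
  proof -
    have "real (q + b' * r) < real t"
      using that by (simp only: of_nat_less_iff)
    then have "real b' * real r < real t - real q"
      by simp
    then have neg: "real (b - f) - (real t - real q) / real r - 1 < 0"
      using r_pos by (simp add: b' field_simps)
    have "0 < t" using that by simp
    have "{d. line_parking_fn t b' (real (b - f) - (real t - real q) / real r - 1) r d} = {}"
      using not_line_parking_fn_neg[OF neg r \<open>0 < t\<close>] by blast
    then show ?thesis
      unfolding K_def by (metis card.empty)
  qed
  have "card {c. line_parking_fn a b p r c} = (\<Sum>t\<le>a. (a choose t) * (f + 1) ^ (a - t) * K t)"
    unfolding K_def card_line_parking_fn_split[OF r f(1) \<open>f < b\<close>] arg b'(3) ..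
  also have "\<dots> = (\<Sum>t \<in> {0..q} \<union> {q + 1..q + b' * r}. (a choose t) * (f + 1) ^ (a - t) * K t)"
    using high top by (intro sum.mono_neutral_right) auto
  also have "\<dots> = (\<Sum>t = 0..q. (a choose t) * (f + 1) ^ (a - t) * K t) +
      (\<Sum>t = q + 1..q + b' * r. (a choose t) * (f + 1) ^ (a - t) * K t)"
    by (rule sum.union_disjoint) auto
  finally show ?thesis
    using low by (simp add: mult.commute mult.left_commute)
qed

declare G.simps [simp del]

lemma G_eq_step:
  assumes r: "r \<ge> 1" and "0 \<le> p" and p_less_b: "p < real b" and "q \<le> a"
    and slope: "real a - real q = real r * (real b - p)"
  defines "f \<equiv> nat \<lfloor>p\<rfloor>"
  defines "b' \<equiv> b - f - 1"
  shows "G a b p r q =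
      (\<Sum>w = 0..q. (f + 1) ^ (a - w) * (b - f) ^ w * (a choose w)) +
      (\<Sum>t = q + 1..q + b' * r. (f + 1) ^ (a - t) * (a choose t) *
         G t b' (real (b - f) - (real t - real q) / real r - 1) r q)"
proof (cases "a - q \<le> r")
  case True
  have f: "real f \<le> p" "p < real f + 1"
    using \<open>0 \<le> p\<close> by (simp_all add: f_def)
  with p_less_b have "f < b" by linarith
  have "real r * real b' < real r * (real b - p)"
    using f(2) r \<open>f < b\<close> by (simp add: b'_def of_nat_diff)
  also have "\<dots> = real (a - q)"
    using \<open>q \<le> a\<close> slope by (simp add: of_nat_diff)
  also have "\<dots> \<le> real r * 1"
    using True by simp
  finally have "b' = 0"
    using r by (simp add: mult_less_cancel_left_pos)
  then have "b = f + 1"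
    using \<open>f < b\<close> by (simp add: b'_def)
  have "(\<Sum>w = 0..q. b ^ (a - q + w) * (a choose (q - w))) = (\<Sum>w = 0..q. b ^ (a - w) * (a choose w))"
    by (subst sum.atLeastAtMost_rev) (use \<open>q \<le> a\<close> in \<open>intro sum.cong refl, auto\<close>)
  with True p_less_b \<open>b' = 0\<close> \<open>b = f + 1\<close> show ?thesis
    unfolding G.simps[of a b p r q] by simp
next
  case False
  have "0 < real b"
    using \<open>0 \<le> p\<close> p_less_b by linarith
  with False p_less_b show ?thesis
    by (simp add: G.simps[of a b p r q] f_def b'_def)
qed

lemma card_line_parking_fn_eq_G:
  assumes r: "r \<ge> 1"
  shows "0 \<le> p \<Longrightarrow> p \<le> real b \<Longrightarrow> q \<le> a \<Longrightarrow> real a - real q = real r * (real b - p) \<Longrightarrow>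
    card {c. line_parking_fn a b p r c} = G a b p r q"
proof (induction b arbitrary: a p q rule: less_induct)
  case (less b)
  show ?case
  proof (cases "p = real b")
    case True
    then show ?thesis
      by (subst G.simps) (simp add: card_line_parking_fn_ge)
  next
    case False
    then have p_less_b: "p < real b" using less.prems(2) by simp
    define f where "f = nat \<lfloor>p\<rfloor>"
    define b' where "b' = b - f - 1"
    define p' where "p' t = real (b - f) - (real t - real q) / real r - 1" for t
    have "real f < real b"
      using of_nat_floor[OF less.prems(1)] p_less_b by (simp add: f_def)
    then have "f < b" by simp
    then have b': "real b' = real b - real f - 1"
      by (simp add: b'_def)
    have rec: "card {d. line_parking_fn t b' (p' t) r d} = G t b' (p' t) r q"
      if "q < t" "t \<le> q + b' * r" for t
    proof (rule less.IH)
      show "b' < b" using \<open>f < b\<close> by (simp add: b'_def)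
      have "real t \<le> real (q + b' * r)"
        using that(2) by (simp only: of_nat_le_iff)
      then show "0 \<le> p' t"
        using r \<open>f < b\<close> by (simp add: p'_def b' of_nat_diff field_simps)
      show "p' t \<le> real b'" "q \<le> t" "real t - real q = real r * (real b' - p' t)"
        using that r \<open>f < b\<close> by (simp_all add: p'_def b')
    qed
    show ?thesis
      unfolding card_line_parking_fn_step[OF r less.prems(1) p_less_b less.prems(3,4)]
        G_eq_step[OF r less.prems(1) p_less_b less.prems(3,4)]
        f_def[symmetric] b'_def[symmetric] p'_def[symmetric]
      using rec by (intro arg_cong2[where f = "(+)"] sum.cong refl) auto
  qed
qed

theorem mainTheorem2:
  fixes a b q r :: nat and p :: real
  assumes "r \<ge> 1"
    and "0 \<le> p" and "p \<le> real b"
    and "q \<le> a"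
    and "real a - real q = real r * (real b - p)"
    and "\<not> (a = 0 \<and> b = 0)"
  shows "card {c :: nat list. parking_fn a b p q c} = G a b p r q"
proof -
  interpret slanted_pentagon a b q r p
    using assms by unfold_locales auto
  have "{c. parking_fn a b p q c} = {c. line_parking_fn a b p r c}"
    using parking_fn_iff_line_parking_fn by blast
  then show ?thesis
    using card_line_parking_fn_eq_G[OF assms(1-5)] by simp
qed

end
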